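(* Let $(\mathfrak{A},\mathfrak{A}_0)$ be a CQ*-algebra as in the context, let $H\in\mathfrak{A}_0$ and set $\alpha_t^H(X)=e^{itH}Xe^{-itH}$. Then for every $X\in\mathfrak{A}$: $\lim_{t\to0}\|e^{itH}X-X\|=0$, $\lim_{t\to0}\|Xe^{itH}-X\|=0$, $\lim_{t\to0}\left\|\frac{e^{itH}-I}{t}X-iHX\right\|=0$, $\lim_{t\to0}\left\|X\frac{e^{itH}-I}{t}-iXH\right\|=0$, $\lim_{t\to0}\|\alpha_t^H(X)-X\|=0$, and $\lim_{t\to0}\left\|\frac{\alpha_t^H(X)-X}{t}-i[H,X]\right\|=0$, where $[H,X]=HX-XH$.
   Context: Let $\mathfrak{A}_0$ be a unital C*-algebra with C*-norm $\|\cdot\|_0$ and unit $I$, and $\|\cdot\|$ another norm on $\mathfrak{A}_0$ with $\|A\|\le\|A\|_0$, $\|AB\|\le\|A\|\,\|B\|_0$, $\|A^*\|=\|A\|$. $\mathfrak{A}$ is the $\|\cdot\|$-completion of $\mathfrak{A}_0$ (norm still $\|\cdot\|$), and for $X\in\mathfrak{A}$, $A\in\mathfrak{A}_0$ and $A_n\in\mathfrak{A}_0$ with $\|A_n-X\|\to0$, $XA:=\lim A_nA$, $AX:=\lim AA_n$; these satisfy $\|XA\|\le\|X\|\|A\|_0$, $\|AX\|\le\|A\|_0\|X\|$. $e^{itH}\in\mathfrak{A}_0$ is defined by the functional calculus of $\mathfrak{A}_0$. *)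

theory Defs
  imports "HOL-Analysis.Analysis"
begin

definition complex_scaling :: "(complex \<Rightarrow> 'a::real_algebra_1 \<Rightarrow> 'a) \<Rightarrow> bool" where
  "complex_scaling sc \<longleftrightarrow>
     (\<forall>a x y. sc a (x + y) = sc a x + sc a y) \<and>
     (\<forall>a b x. sc (a + b) x = sc a x + sc b x) \<and>
     (\<forall>a b x. sc a (sc b x) = sc (a * b) x) \<and>
     (\<forall>x. sc 1 x = x) \<and>
     (\<forall>r x. sc (complex_of_real r) x = scaleR r x) \<and>
     (\<forall>a x y. sc a (x * y) = sc a x * y \<and> sc a (x * y) = x * sc a y)"

text \<open>Unital C*-algebra: the type is a unital Banach algebra (norm = C*-norm,
  unit = 1), with complex scalars sc and involution star.\<close>
definition unital_cstar_algebra ::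
  "(complex \<Rightarrow> 'a::{real_normed_algebra_1,banach} \<Rightarrow> 'a) \<Rightarrow> ('a \<Rightarrow> 'a) \<Rightarrow> bool" where
  "unital_cstar_algebra sc star \<longleftrightarrow>
     complex_scaling sc \<and>
     (\<forall>a x. norm (sc a x) = cmod a * norm x) \<and>
     (\<forall>x. star (star x) = x) \<and>
     (\<forall>x y. star (x + y) = star x + star y) \<and>
     (\<forall>a x. star (sc a x) = sc (cnj a) (star x)) \<and>
     (\<forall>x y. star (x * y) = star y * star x) \<and>
     (\<forall>x. norm (star x * x) = (norm x)\<^sup>2)"

definition cq_norm ::
  "(complex \<Rightarrow> 'a::{real_normed_algebra_1,banach} \<Rightarrow> 'a) \<Rightarrow> ('a \<Rightarrow> 'a) \<Rightarrow> ('a \<Rightarrow> real) \<Rightarrow> bool" where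
  "cq_norm sc star n \<longleftrightarrow>
     (\<forall>x. 0 \<le> n x) \<and>
     (\<forall>x. n x = 0 \<longrightarrow> x = 0) \<and>
     (\<forall>x y. n (x + y) \<le> n x + n y) \<and>
     (\<forall>a x. n (sc a x) = cmod a * n x) \<and>
     (\<forall>x. n x \<le> norm x) \<and>
     (\<forall>x y. n (x * y) \<le> n x * norm y) \<and>
     (\<forall>x. n (star x) = n x)"

text \<open>j embeds (A0, n) isometrically and densely into the Banach space 'b:
  'b is the n-completion of A0.\<close>
definition is_completion :: "('a::real_vector \<Rightarrow> real) \<Rightarrow> ('a \<Rightarrow> 'b::{real_normed_vector,banach}) \<Rightarrow> bool" where
  "is_completion n j \<longleftrightarrow> linear j \<and> (\<forall>x. norm (j x) = n x) \<and> closure (range j) = UNIV"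

definition approx_seq :: "('a \<Rightarrow> 'b::topological_space) \<Rightarrow> 'b \<Rightarrow> nat \<Rightarrow> 'a" where
  "approx_seq j X = (SOME s. (\<lambda>k. j (s k)) \<longlonglongrightarrow> X)"

definition Lmul :: "('a::times \<Rightarrow> 'b::t2_space) \<Rightarrow> 'a \<Rightarrow> 'b \<Rightarrow> 'b" where
  "Lmul j A X = lim (\<lambda>k. j (A * approx_seq j X k))"

definition Rmul :: "('a::times \<Rightarrow> 'b::t2_space) \<Rightarrow> 'b \<Rightarrow> 'a \<Rightarrow> 'b" where
  "Rmul j X A = lim (\<lambda>k. j (approx_seq j X k * A))"

definition expit :: "(complex \<Rightarrow> 'a::{real_normed_algebra_1,banach} \<Rightarrow> 'a) \<Rightarrow> 'a \<Rightarrow> real \<Rightarrow> 'a" where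
  "expit sc H t = exp (sc (\<i> * complex_of_real t) H)"

definition alphaH :: "(complex \<Rightarrow> 'a::{real_normed_algebra_1,banach} \<Rightarrow> 'a) \<Rightarrow> ('a \<Rightarrow> 'b::t2_space) \<Rightarrow> 'a \<Rightarrow> real \<Rightarrow> 'b \<Rightarrow> 'b" where
  "alphaH sc j H t X = Rmul j (Lmul j (expit sc H t) X) (expit sc H (- t))"

end

(*
  Left and right multiplication by elements of A0 are bounded bilinear maps for the
  norm n on A0 (the left bound n (A B) <= norm A * n B follows from the right one by
  applying the involution, which is isometric for both norms), so they extend by
  continuity to bounded bilinear maps A0 x A -> A.  Every limit is then continuity
  of these maps combined with exp (t K) -> 1 and (exp (t K) - 1) / t -> K in the
  C*-norm, where K = i H.  For the derivative of the automorphism group one uses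
  (e^{tK} X e^{-tK} - X) / t = (D_t X) e^{-tK} - X D_{-t}  with  D_s = (e^{sK} - 1) / s.
*)
theory Submission
  imports Defs
begin

lemma Cauchy_dominated:
  fixes f :: "nat \<Rightarrow> 'a::real_normed_vector" and g :: "nat \<Rightarrow> 'b::real_normed_vector"
  assumes "Cauchy g" and dominated: "\<And>k m. norm (f k - f m) \<le> C * norm (g k - g m)"
  shows "Cauchy f"
proof (rule CauchyI)
  fix e :: real
  assume "0 < e"
  then obtain M where M: "\<forall>k\<ge>M. \<forall>m\<ge>M. norm (g k - g m) < e / (\<bar>C\<bar> + 1)"
    using CauchyD[OF \<open>Cauchy g\<close>, of "e / (\<bar>C\<bar> + 1)"] by auto
  have "norm (f k - f m) < e" if "k \<ge> M" "m \<ge> M" for k m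
  proof -
    have "norm (f k - f m) \<le> (\<bar>C\<bar> + 1) * norm (g k - g m)"
      using dominated[of k m] by (smt (verit) mult_right_mono norm_ge_zero)
    also have "\<dots> < e"
      using M that by (simp add: field_simps)
    finally show ?thesis .
  qed
  then show "\<exists>M. \<forall>k\<ge>M. \<forall>m\<ge>M. norm (f k - f m) < e" by blast
qed

lemma difference_quotient_tendsto:
  fixes f :: "real \<Rightarrow> 'a::real_normed_vector"
  assumes "(f has_vector_derivative f') (at x)"
  shows "((\<lambda>y. (1 / (y - x)) *\<^sub>R (f y - f x)) \<longlongrightarrow> f') (at x)"
proof -
  have "((\<lambda>y. norm ((f y - f x - (y - x) *\<^sub>R f') /\<^sub>R norm (y - x))) \<longlongrightarrow> 0) (at x)"
    using assms by (intro tendsto_norm_zero) (simp add: has_vector_derivative_def has_derivative_at_within)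
  moreover have "\<forall>\<^sub>F y in at x. norm ((f y - f x - (y - x) *\<^sub>R f') /\<^sub>R norm (y - x))
      = norm ((1 / (y - x)) *\<^sub>R (f y - f x) - f')"
  proof (rule eventually_at_filter[THEN iffD2, OF always_eventually], intro allI impI)
    fix y assume "y \<noteq> x"
    then have "(1 / (y - x)) *\<^sub>R (f y - f x) - f' = (1 / (y - x)) *\<^sub>R (f y - f x - (y - x) *\<^sub>R f')"
      by (simp add: scaleR_diff_right)
    then show "norm ((f y - f x - (y - x) *\<^sub>R f') /\<^sub>R norm (y - x)) = norm ((1 / (y - x)) *\<^sub>R (f y - f x) - f')"
      by (simp add: divide_inverse mult.commute)
  qed
  ultimately have "((\<lambda>y. norm ((1 / (y - x)) *\<^sub>R (f y - f x) - f')) \<longlongrightarrow> 0) (at x)"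
    by (rule Lim_transform_eventually)
  then show ?thesis
    by (simp add: tendsto_norm_zero_iff Lim_null[symmetric])
qed

lemma tendsto_at_zero_minus:
  fixes f :: "'a::real_normed_vector \<Rightarrow> 'b::topological_space"
  assumes "(f \<longlongrightarrow> l) (at 0)"
  shows "((\<lambda>t. f (- t)) \<longlongrightarrow> l) (at 0)"
proof -
  have "((f \<circ> uminus) \<longlongrightarrow> l) (at 0)"
    using assms filtermap_at_minus[of "0::'a"] by (simp add: tendsto_compose_filtermap)
  then show ?thesis
    by (simp add: comp_def)
qed

lemma exp_scaleR_tendsto_one:
  fixes K :: "'a::{real_normed_algebra_1,banach}"
  shows "((\<lambda>t::real. exp (t *\<^sub>R K)) \<longlongrightarrow> 1) (at 0)"
  using has_vector_derivative_continuous[OF exp_scaleR_has_vector_derivative_right[of K 0 UNIV]]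
  by (simp add: continuous_at)

lemma exp_scaleR_difference_quotient_tendsto:
  fixes K :: "'a::{real_normed_algebra_1,banach}"
  shows "((\<lambda>t::real. (1 / t) *\<^sub>R (exp (t *\<^sub>R K) - 1)) \<longlongrightarrow> K) (at 0)"
  using difference_quotient_tendsto[OF exp_scaleR_has_vector_derivative_right[of K 0]] by simp

locale normed_completion =
  fixes n :: "'a::real_normed_vector \<Rightarrow> real" and j :: "'a \<Rightarrow> 'b::banach"
  assumes completion: "is_completion n j"
begin

lemma linear_j: "linear j" and norm_j: "norm (j x) = n x"
  using completion by (auto simp: is_completion_def)

lemma approx_seq_tendsto: "(\<lambda>k. j (approx_seq j X k)) \<longlonglongrightarrow> X"
proof -
  have "X \<in> closure (range j)"
    using completion by (simp add: is_completion_def)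
  then obtain x where x: "\<forall>k. x k \<in> range j" "x \<longlonglongrightarrow> X"
    by (auto simp: closure_sequential)
  then have "(\<lambda>k. j (inv j (x k))) \<longlonglongrightarrow> X"
    by (simp add: f_inv_into_f)
  then show ?thesis
    unfolding approx_seq_def by (rule someI[where P = "\<lambda>s. (\<lambda>k. j (s k)) \<longlonglongrightarrow> X"])
qed

lemma tendsto_lim_approx_seq:
  assumes f_diff: "\<And>x y. f (x - y) = f x - f y" and f_bound: "\<And>x. n (f x) \<le> C * n x"
    and s: "(\<lambda>k. j (s k)) \<longlonglongrightarrow> X"
  shows "(\<lambda>k. j (f (s k))) \<longlonglongrightarrow> lim (\<lambda>k. j (f (approx_seq j X k)))"
proof -
  have lipschitz: "norm (j (f x) - j (f y)) \<le> C * norm (j x - j y)" for x y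
    using f_bound[of "x - y"] by (simp add: f_diff norm_j linear_diff[OF linear_j, symmetric])
  define t where "t = approx_seq j X"
  have t: "(\<lambda>k. j (t k)) \<longlonglongrightarrow> X"
    unfolding t_def by (rule approx_seq_tendsto)
  have "Cauchy (\<lambda>k. j (f (t k)))"
    by (rule Cauchy_dominated[OF LIMSEQ_imp_Cauchy[OF t] lipschitz])
  then have lim: "(\<lambda>k. j (f (t k))) \<longlonglongrightarrow> lim (\<lambda>k. j (f (t k)))"
    by (simp add: Cauchy_convergent_iff convergent_LIMSEQ_iff)
  have "(\<lambda>k. j (f (s k)) - j (f (t k))) \<longlonglongrightarrow> 0"
  proof (rule Lim_null_comparison)
    show "\<forall>\<^sub>F k in sequentially. norm (j (f (s k)) - j (f (t k))) \<le> C * norm (j (s k) - j (t k))"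
      using lipschitz by simp
    show "(\<lambda>k. C * norm (j (s k) - j (t k))) \<longlonglongrightarrow> 0"
      using tendsto_diff[OF s t] by (intro tendsto_mult_right_zero tendsto_norm_zero) simp
  qed
  from tendsto_add[OF this lim] show ?thesis
    by (simp add: t_def)
qed

lemma bounded_bilinear_extension:
  assumes p: "bounded_bilinear p" and p_bound: "\<And>A x. n (p A x) \<le> norm A * n x"
  shows "bounded_bilinear (\<lambda>A X. lim (\<lambda>k. j (p A (approx_seq j X k))))"
proof -
  interpret p: bounded_bilinear p by (rule p)
  define P where "P A X = lim (\<lambda>k. j (p A (approx_seq j X k)))" for A X
  have P_tendsto: "(\<lambda>k. j (p A (s k))) \<longlonglongrightarrow> P A X" if "(\<lambda>k. j (s k)) \<longlonglongrightarrow> X" for s A X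
    unfolding P_def by (rule tendsto_lim_approx_seq[OF p.diff_right p_bound that])
  have P_eqI: "P A X = Y" if "(\<lambda>k. j (s k)) \<longlonglongrightarrow> X" "(\<lambda>k. j (p A (s k))) \<longlonglongrightarrow> Y" for s A X Y
    using P_tendsto[OF that(1)] that(2) by (rule LIMSEQ_unique)
  note approx = approx_seq_tendsto
  have "bounded_bilinear P"
  proof
    show "P (A + A') X = P A X + P A' X" for A A' X
      using tendsto_add[OF P_tendsto P_tendsto, OF approx approx]
      by (intro P_eqI[OF approx]) (simp add: p.add_left linear_add[OF linear_j])
    show "P A (X + Y) = P A X + P A Y" for A X Y
      using tendsto_add[OF approx approx] tendsto_add[OF P_tendsto P_tendsto, OF approx approx]
      by (intro P_eqI[of "\<lambda>k. approx_seq j X k + approx_seq j Y k"])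
        (simp_all add: p.add_right linear_add[OF linear_j])
    show "P (r *\<^sub>R A) X = r *\<^sub>R P A X" for r A X
      using tendsto_scaleR[OF tendsto_const P_tendsto, OF approx]
      by (intro P_eqI[OF approx]) (simp add: p.scaleR_left linear_scale[OF linear_j])
    show "P A (r *\<^sub>R X) = r *\<^sub>R P A X" for r A X
      using tendsto_scaleR[OF tendsto_const approx] tendsto_scaleR[OF tendsto_const P_tendsto, OF approx]
      by (intro P_eqI[of "\<lambda>k. r *\<^sub>R approx_seq j X k"])
        (simp_all add: p.scaleR_right linear_scale[OF linear_j])
    have "norm (P A X) \<le> norm A * norm X" for A X
      using p_bound
      by (intro tendsto_le[OF _ tendsto_mult_left[OF tendsto_norm[OF approx]] tendsto_norm[OF P_tendsto[OF approx]]])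
        (simp_all add: norm_j)
    then show "\<exists>K. \<forall>A X. norm (P A X) \<le> norm A * norm X * K"
      by (intro exI[of _ 1]) simp
  qed
  then show ?thesis
    by (simp add: P_def[abs_def])
qed

end

locale cq_completion = normed_completion n j
  for n :: "'a::{real_normed_algebra_1,banach} \<Rightarrow> real" and j :: "'a \<Rightarrow> 'b::banach" +
  assumes n_mult_left: "n (x * y) \<le> norm x * n y"
    and n_mult_right: "n (x * y) \<le> n x * norm y"
begin

sublocale Lmul: bounded_bilinear "Lmul j"
  unfolding Lmul_def[abs_def]
  by (rule bounded_bilinear_extension[OF bounded_bilinear_mult n_mult_left])

sublocale Rmul: bounded_bilinear "Rmul j"
proof -
  have "n (x * A) \<le> norm A * n x" for A x
    using n_mult_right[of x A] by (simp add: mult.commute)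
  from bounded_bilinear_extension[OF bounded_bilinear.flip[OF bounded_bilinear_mult] this]
  show "bounded_bilinear (Rmul j)"
    unfolding Rmul_def[abs_def] by (rule bounded_bilinear.flip)
qed

lemma Lmul_one [simp]: "Lmul j 1 X = X"
  unfolding Lmul_def by (simp add: limI approx_seq_tendsto)

lemma Rmul_one [simp]: "Rmul j X 1 = X"
  unfolding Rmul_def by (simp add: limI approx_seq_tendsto)

lemma conjugation_tendsto:
  assumes "(U \<longlongrightarrow> 1) F" and "(V \<longlongrightarrow> 1) F"
  shows "((\<lambda>t. Rmul j (Lmul j (U t) X) (V t)) \<longlongrightarrow> X) F"
  using Rmul.tendsto[OF Lmul.tendsto[OF assms(1) tendsto_const] assms(2)] by simp

lemma exp_conjugation_difference_quotient_tendsto: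
  fixes K :: 'a
  defines "E t \<equiv> exp (t *\<^sub>R K)"
  shows "((\<lambda>t. (1 / t) *\<^sub>R (Rmul j (Lmul j (E t) X) (E (- t)) - X))
           \<longlongrightarrow> Lmul j K X - Rmul j X K) (at 0)"
proof -
  define D where "D t = (1 / t) *\<^sub>R (E t - 1)" for t
  have D: "(D \<longlongrightarrow> K) (at 0)"
    unfolding D_def E_def by (rule exp_scaleR_difference_quotient_tendsto)
  have E_minus: "((\<lambda>t. E (- t)) \<longlongrightarrow> 1) (at 0)"
    unfolding E_def by (rule tendsto_at_zero_minus[OF exp_scaleR_tendsto_one])
  from D tendsto_at_zero_minus[OF D] E_minus
  have "((\<lambda>t. Rmul j (Lmul j (D t) X) (E (- t)) - Rmul j X (D (- t)))
               \<longlongrightarrow> Rmul j (Lmul j K X) 1 - Rmul j X K) (at 0)"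
    by (intro tendsto_diff Rmul.tendsto Lmul.tendsto tendsto_const)
  moreover have "Rmul j (Lmul j (D t) X) (E (- t)) - Rmul j X (D (- t))
      = (1 / t) *\<^sub>R (Rmul j (Lmul j (E t) X) (E (- t)) - X)" for t
    by (simp add: D_def Lmul.diff_left Lmul.scaleR_left Rmul.scaleR_left Rmul.diff_left Rmul.diff_right
        Rmul.scaleR_right algebra_simps)
  ultimately show ?thesis
    by simp
qed

end

lemma norm_star:
  assumes "unital_cstar_algebra sc star"
  shows "norm (star x) = norm x"
proof -
  have star_star: "star (star x) = x" and cstar: "norm (star x * x) = (norm x)\<^sup>2" for x
    using assms by (auto simp: unital_cstar_algebra_def)
  have le: "norm x \<le> norm (star x)" for x
  proof (cases "x = 0")
    case False
    have "(norm x)\<^sup>2 \<le> norm (star x) * norm x"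
      using cstar[of x] norm_mult_ineq[of "star x" x] by simp
    with False show ?thesis
      by (simp add: power2_eq_square)
  qed simp
  show ?thesis
    using le[of x] le[of "star x"] by (simp add: star_star)
qed

lemma cq_norm_mult_left:
  assumes "unital_cstar_algebra sc star" and "cq_norm sc star n"
  shows "n (x * y) \<le> norm x * n y"
proof -
  have star_mult: "star (x * y) = star y * star x"
    using assms(1) by (simp add: unital_cstar_algebra_def)
  have n_star: "n (star z) = n z" and n_mult_right: "n (u * v) \<le> n u * norm v" for z u v
    using assms(2) by (auto simp: cq_norm_def)
  have "n (x * y) = n (star y * star x)"
    by (metis n_star star_mult)
  also have "\<dots> \<le> n (star y) * norm (star x)"
    by (rule n_mult_right)
  also have "\<dots> = norm x * n y"
    by (simp add: n_star norm_star[OF assms(1)])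
  finally show ?thesis .
qed

lemma expit_eq_exp_scaleR:
  assumes "complex_scaling sc"
  shows "expit sc H t = exp (t *\<^sub>R sc \<i> H)"
proof -
  have "sc (\<i> * complex_of_real t) H = sc (complex_of_real t) (sc \<i> H)"
    using assms unfolding complex_scaling_def by (metis mult.commute)
  also have "\<dots> = t *\<^sub>R sc \<i> H"
    using assms unfolding complex_scaling_def by metis
  finally show ?thesis
    by (simp add: expit_def)
qed

theorem lemma5p2:
  fixes sc :: "complex \<Rightarrow> 'a::{real_normed_algebra_1,banach} \<Rightarrow> 'a"
    and star :: "'a \<Rightarrow> 'a"
    and n :: "'a \<Rightarrow> real"
    and j :: "'a \<Rightarrow> 'b::{real_normed_vector,banach}"
    and H :: 'a and X :: 'b
  assumes "unital_cstar_algebra sc star"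
    and "cq_norm sc star n"
    and "is_completion n j"
  shows "((\<lambda>t. norm (Lmul j (expit sc H t) X - X)) \<longlongrightarrow> 0) (at (0::real)) \<and>
     ((\<lambda>t. norm (Rmul j X (expit sc H t) - X)) \<longlongrightarrow> 0) (at (0::real)) \<and>
     ((\<lambda>t. norm (Lmul j (scaleR (1 / t) (expit sc H t - 1)) X
                    - Lmul j (sc \<i> H) X)) \<longlongrightarrow> 0) (at (0::real)) \<and>
     ((\<lambda>t. norm (Rmul j X (scaleR (1 / t) (expit sc H t - 1))
                    - Rmul j X (sc \<i> H))) \<longlongrightarrow> 0) (at (0::real)) \<and>
     ((\<lambda>t. norm (alphaH sc j H t X - X)) \<longlongrightarrow> 0) (at (0::real)) \<and>
     ((\<lambda>t. norm (scaleR (1 / t) (alphaH sc j H t X - X)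
                    - (Lmul j (sc \<i> H) X - Rmul j X (sc \<i> H)))) \<longlongrightarrow> 0) (at (0::real))"
proof -
  interpret cq_completion n j
  proof
    show "is_completion n j" by (rule assms(3))
    show "n (x * y) \<le> norm x * n y" for x y
      using assms(1,2) by (rule cq_norm_mult_left)
    show "n (x * y) \<le> n x * norm y" for x y
      using assms(2) by (simp add: cq_norm_def)
  qed
  define K where "K = sc \<i> H"
  have expit: "expit sc H t = exp (t *\<^sub>R K)" for t
    using assms(1) by (simp add: K_def unital_cstar_algebra_def expit_eq_exp_scaleR)
  note E = exp_scaleR_tendsto_one[of K] and D = exp_scaleR_difference_quotient_tendsto[of K]
  show ?thesis
    unfolding tendsto_norm_zero_iff Lim_null[symmetric] alphaH_def expit K_def[symmetric]
    using Lmul.tendsto[OF E tendsto_const] Rmul.tendsto[OF tendsto_const E]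
      Lmul.tendsto[OF D tendsto_const] Rmul.tendsto[OF tendsto_const D]
      conjugation_tendsto[OF E tendsto_at_zero_minus[OF E]]
      exp_conjugation_difference_quotient_tendsto[of K X]
    by simp
qed

end
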